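(* Let $A,B$ be non-empty sets, $I$ a non-empty index set, $\{V_i\}_{i\in I}\subseteq\mathcal R(A)$, $\{W_i\}_{i\in I}\subseteq\mathcal R(B)$, $Z\in\mathcal R(A,B)$. For each $t\in\{1,\dots,6\}$, the system $WL^{2\text{-}t}(A,B,I,V_i,W_i,Z)$ has a greatest solution (possibly the empty relation, i.e. constantly $0$). If moreover $Z$ is a partial fuzzy function, then the greatest solutions to $WL^{2\text{-}3}(A,B,I,V_i,W_i,Z)$ and $WL^{2\text{-}4}(A,B,I,V_i,W_i,Z)$ are partial fuzzy functions.
   Context: $\mathcal L=(L,\wedge,\vee,\otimes,\to,0,1)$ is a complete residuated lattice; $x\leftrightarrow y=(x\to y)\wedge(y\to x)$. For non-empty sets $X,Y$, $\mathcal R(X,Y)$ is the set of fuzzy relations $X\times Y\to L$, $\mathcal R(X)=\mathcal R(X,X)$, ordered pointwise; $R^{-1}(y,x)=R(x,y)$; $(R\circ S)(x,t)=\bigvee_{y}R(x,y)\otimes S(y,t)$. Heterogeneous systems with unknown $U\in\mathcal R(A,B)$: $WL^{2\text{-}1}$: $U^{-1}\circ V_i\le W_i\circ U^{-1}$ ($i\in I$), $U\le Z$; $WL^{2\text{-}2}$: $V_i\circ U\le U\circ W_i$ ($i\in I$), $U\le Z$; $WL^{2\text{-}3}$: $U^{-1}\circ V_i\le W_i\circ U^{-1}$ and $U\circ W_i\le V_i\circ U$ ($i\in I$), $U\le Z$; $WL^{2\text{-}4}$: $V_i\circ U\le U\circ W_i$ and $W_i\circ U^{-1}\le U^{-1}\circ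 V_i$ ($i\in I$), $U\le Z$; $WL^{2\text{-}5}$: $V_i\circ U=U\circ W_i$ ($i\in I$), $U\le Z$; $WL^{2\text{-}6}$: $U^{-1}\circ V_i=W_i\circ U^{-1}$ ($i\in I$), $U\le Z$. For $R\in\mathcal R(A,B)$, its kernel is $E_A^R(a_1,a_2)=\bigwedge_{b\in B}R(a_1,b)\leftrightarrow R(a_2,b)$ and co-kernel $E_B^R(b_1,b_2)=\bigwedge_{a\in A}R(a,b_1)\leftrightarrow R(a,b_2)$. $R$ is a partial fuzzy function if $R(a,b_1)\otimes R(a,b_2)\le E_B^R(b_1,b_2)$ for all $a\in A$, $b_1,b_2\in B$ (equivalently, as is known, $R\circ R^{-1}\circ R\le R$). *)

theory Defs
  imports Main
begin

text \<open>Complete residuated lattice: the carrier is a type of class complete_lattice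
  (so meet, join, 0 = bot, 1 = top and infinite meets/joins are given), together with
  a multiplication m (the tensor) and a residuum r (the arrow).\<close>

definition complete_residuated_lattice ::
  "('l::complete_lattice \<Rightarrow> 'l \<Rightarrow> 'l) \<Rightarrow> ('l \<Rightarrow> 'l \<Rightarrow> 'l) \<Rightarrow> bool" where
  "complete_residuated_lattice m r \<longleftrightarrow>
     (\<forall>x y z. m (m x y) z = m x (m y z)) \<and>
     (\<forall>x y. m x y = m y x) \<and>
     (\<forall>x. m x top = x) \<and>
     (\<forall>x y z. m x y \<le> z \<longleftrightarrow> x \<le> r y z)"

definition biimp :: "('l::complete_lattice \<Rightarrow> 'l \<Rightarrow> 'l) \<Rightarrow> 'l \<Rightarrow> 'l \<Rightarrow> 'l" where
  "biimp r x y = inf (r x y) (r y x)"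

text \<open>Fuzzy relations X \<times> Y \<rightarrow> L are functions 'x \<Rightarrow> 'y \<Rightarrow> 'l, ordered pointwise
  (the library's order on functions).\<close>

definition conv :: "('a \<Rightarrow> 'b \<Rightarrow> 'l) \<Rightarrow> 'b \<Rightarrow> 'a \<Rightarrow> 'l" where
  "conv R y x = R x y"

definition rcomp :: "('l::complete_lattice \<Rightarrow> 'l \<Rightarrow> 'l) \<Rightarrow>
    ('a \<Rightarrow> 'b \<Rightarrow> 'l) \<Rightarrow> ('b \<Rightarrow> 'c \<Rightarrow> 'l) \<Rightarrow> 'a \<Rightarrow> 'c \<Rightarrow> 'l" where
  "rcomp m R S x t = (SUP y. m (R x y) (S y t))"

definition kernel :: "('l::complete_lattice \<Rightarrow> 'l \<Rightarrow> 'l) \<Rightarrow> ('a \<Rightarrow> 'b \<Rightarrow> 'l) \<Rightarrow> 'a \<Rightarrow> 'a \<Rightarrow> 'l" where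
  "kernel r R a1 a2 = (INF b. biimp r (R a1 b) (R a2 b))"

definition cokernel :: "('l::complete_lattice \<Rightarrow> 'l \<Rightarrow> 'l) \<Rightarrow> ('a \<Rightarrow> 'b \<Rightarrow> 'l) \<Rightarrow> 'b \<Rightarrow> 'b \<Rightarrow> 'l" where
  "cokernel r R b1 b2 = (INF a. biimp r (R a b1) (R a b2))"

definition partial_fuzzy_function ::
  "('l::complete_lattice \<Rightarrow> 'l \<Rightarrow> 'l) \<Rightarrow> ('l \<Rightarrow> 'l \<Rightarrow> 'l) \<Rightarrow> ('a \<Rightarrow> 'b \<Rightarrow> 'l) \<Rightarrow> bool" where
  "partial_fuzzy_function m r R \<longleftrightarrow>
     (\<forall>a b1 b2. m (R a b1) (R a b2) \<le> cokernel r R b1 b2)"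

definition WL21 where
  "WL21 m I V W Z U \<longleftrightarrow>
     (\<forall>i\<in>I. rcomp m (conv U) (V i) \<le> rcomp m (W i) (conv U)) \<and> U \<le> Z"

definition WL22 where
  "WL22 m I V W Z U \<longleftrightarrow>
     (\<forall>i\<in>I. rcomp m (V i) U \<le> rcomp m U (W i)) \<and> U \<le> Z"

definition WL23 where
  "WL23 m I V W Z U \<longleftrightarrow>
     (\<forall>i\<in>I. rcomp m (conv U) (V i) \<le> rcomp m (W i) (conv U) \<and>
             rcomp m U (W i) \<le> rcomp m (V i) U) \<and> U \<le> Z"

definition WL24 where
  "WL24 m I V W Z U \<longleftrightarrow>
     (\<forall>i\<in>I. rcomp m (V i) U \<le> rcomp m U (W i) \<and>
             rcomp m (W i) (conv U) \<le> rcomp m (conv U) (V i)) \<and> U \<le> Z"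

definition WL25 where
  "WL25 m I V W Z U \<longleftrightarrow>
     (\<forall>i\<in>I. rcomp m (V i) U = rcomp m U (W i)) \<and> U \<le> Z"

definition WL26 where
  "WL26 m I V W Z U \<longleftrightarrow>
     (\<forall>i\<in>I. rcomp m (conv U) (V i) = rcomp m (W i) (conv U)) \<and> U \<le> Z"

definition greatest_solution :: "(('a \<Rightarrow> 'b \<Rightarrow> 'l::complete_lattice) \<Rightarrow> bool) \<Rightarrow> ('a \<Rightarrow> 'b \<Rightarrow> 'l) \<Rightarrow> bool" where
  "greatest_solution P U \<longleftrightarrow> P U \<and> (\<forall>U'. P U' \<longrightarrow> U' \<le> U)"

end

theory Submission
  imports Defs
begin

text \<open>Composition with a fuzzy relation, on either side and with or without converse, preserves
  arbitrary joins of relations. Hence each inequation \<open>F U \<le> G U\<close> with \<open>F\<close> join-preserving and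
  \<open>G\<close> monotone, and each equation between join-preserving terms, has a join-closed solution set;
  so has \<open>U \<le> Z\<close>, and the join of all solutions of each system is its greatest solution.
  For the partial-function claim, \<open>U\<close> is a partial fuzzy function iff
  \<open>U \<circ> U\<inverse> \<circ> U \<le> U\<close>. The inequations of \<open>WL2-4\<close> are inherited by \<open>U \<circ> U\<inverse> \<circ> U\<close>, and
  \<open>U \<circ> U\<inverse> \<circ> U \<le> Z \<circ> Z\<inverse> \<circ> Z \<le> Z\<close> when \<open>Z\<close> is a partial fuzzy function; so \<open>U \<circ> U\<inverse> \<circ> U\<close> is
  again a solution, hence below the greatest one. \<open>WL2-3\<close> is \<open>WL2-4\<close> for the converse
  families \<open>V\<^sub>i\<inverse>, W\<^sub>i\<inverse>\<close>.\<close>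

lemma greatest_solution_Sup:
  assumes "\<And>\<U>. \<forall>U\<in>\<U>. P U \<Longrightarrow> P (Sup \<U>)"
  shows "greatest_solution P (Sup {U. P U})"
  using assms by (auto simp: greatest_solution_def intro: Sup_upper)

lemma le_Sup_closed:
  fixes F G :: "'a::complete_lattice \<Rightarrow> 'b::complete_lattice"
  assumes "F (Sup \<U>) = (SUP U\<in>\<U>. F U)" and "mono G" and "\<forall>U\<in>\<U>. F U \<le> G U"
  shows "F (Sup \<U>) \<le> G (Sup \<U>)"
proof -
  have "(SUP U\<in>\<U>. F U) \<le> (SUP U\<in>\<U>. G U)"
    using assms(3) by (auto intro: SUP_mono)
  also have "\<dots> \<le> G (Sup \<U>)"
    using assms(2) by (rule mono_Sup)
  finally show ?thesis using assms(1) by simp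
qed

lemma eq_Sup_closed:
  fixes F G :: "'a::complete_lattice \<Rightarrow> 'b::complete_lattice"
  assumes "F (Sup \<U>) = (SUP U\<in>\<U>. F U)" and "G (Sup \<U>) = (SUP U\<in>\<U>. G U)"
    and "\<forall>U\<in>\<U>. F U = G U"
  shows "F (Sup \<U>) = G (Sup \<U>)"
  using assms by (simp cong: SUP_cong)

lemma conv_conv [simp]: "conv (conv R) = R"
  by (simp add: conv_def fun_eq_iff)

lemma conv_le_conv_iff [simp]: "conv R \<le> conv S \<longleftrightarrow> R \<le> S"
  by (auto simp: le_fun_def conv_def)

lemma conv_Sup: "conv (Sup \<U>) = (SUP U\<in>\<U>. conv U)"
  by (simp add: conv_def fun_eq_iff image_image)

locale residuated =
  fixes m r :: "'l::complete_lattice \<Rightarrow> 'l \<Rightarrow> 'l"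
  assumes residuated: "complete_residuated_lattice m r"
begin

lemma mult_assoc: "m (m x y) z = m x (m y z)"
  using residuated unfolding complete_residuated_lattice_def by blast

lemma mult_commute: "m x y = m y x"
  using residuated unfolding complete_residuated_lattice_def by blast

lemma residuation: "m x y \<le> z \<longleftrightarrow> x \<le> r y z"
  using residuated unfolding complete_residuated_lattice_def by blast

lemma residuation': "m x y \<le> z \<longleftrightarrow> y \<le> r x z"
  using residuation mult_commute by metis

lemma mult_mono: "x \<le> x' \<Longrightarrow> y \<le> y' \<Longrightarrow> m x y \<le> m x' y'"
  by (metis residuation residuation' order_refl order_trans)

lemma mult_SUP_distrib_left: "m x (SUP s\<in>S. f s) = (SUP s\<in>S. m x (f s))"
proof (rule antisym)
  show "m x (SUP s\<in>S. f s) \<le> (SUP s\<in>S. m x (f s))"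
    unfolding residuation' by (rule SUP_least) (metis residuation' SUP_upper)
  show "(SUP s\<in>S. m x (f s)) \<le> m x (SUP s\<in>S. f s)"
    by (rule SUP_least, rule mult_mono) (auto intro: SUP_upper)
qed

lemma mult_SUP_distrib_right: "m (SUP s\<in>S. f s) y = (SUP s\<in>S. m (f s) y)"
  by (simp only: mult_commute[of _ y] mult_SUP_distrib_left)

lemma rcomp_mono: "R \<le> R' \<Longrightarrow> S \<le> S' \<Longrightarrow> rcomp m R S \<le> rcomp m R' S'"
  unfolding le_fun_def rcomp_def by (auto intro!: SUP_mono' mult_mono)

lemma rcomp_assoc: "rcomp m (rcomp m R S) T = rcomp m R (rcomp m S T)"
proof (rule ext, rule ext)
  fix x t
  have "rcomp m (rcomp m R S) T x t = (SUP z. SUP y. m (m (R x y) (S y z)) (T z t))"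
    by (simp add: rcomp_def mult_SUP_distrib_right)
  also have "\<dots> = (SUP y. SUP z. m (R x y) (m (S y z) (T z t)))"
    by (simp only: mult_assoc, rule SUP_commute)
  also have "\<dots> = rcomp m R (rcomp m S T) x t"
    by (simp add: rcomp_def mult_SUP_distrib_left)
  finally show "rcomp m (rcomp m R S) T x t = rcomp m R (rcomp m S T) x t" .
qed

lemma conv_rcomp: "conv (rcomp m R S) = rcomp m (conv S) (conv R)"
  by (simp add: conv_def rcomp_def mult_commute fun_eq_iff)

lemma rcomp_Sup_left: "rcomp m (Sup \<U>) S = (SUP U\<in>\<U>. rcomp m U S)"
  unfolding rcomp_def fun_eq_iff
  by (simp add: mult_SUP_distrib_right image_image SUP_commute[where B = \<U>])

lemma rcomp_Sup_right: "rcomp m R (Sup \<U>) = (SUP U\<in>\<U>. rcomp m R U)"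
  unfolding rcomp_def fun_eq_iff
  by (simp add: mult_SUP_distrib_left image_image SUP_commute[where B = \<U>])

lemma rcomp_conv_Sup_left: "rcomp m (conv (Sup \<U>)) S = (SUP U\<in>\<U>. rcomp m (conv U) S)"
  by (simp add: conv_Sup rcomp_Sup_left image_image)

lemma rcomp_conv_Sup_right: "rcomp m R (conv (Sup \<U>)) = (SUP U\<in>\<U>. rcomp m R (conv U))"
  by (simp add: conv_Sup rcomp_Sup_right image_image)

lemma mono_rcomp_left: "mono (\<lambda>U. rcomp m U S)"
  and mono_rcomp_right: "mono (\<lambda>U. rcomp m R U)"
  and mono_rcomp_conv_left: "mono (\<lambda>U. rcomp m (conv U) S)"
  and mono_rcomp_conv_right: "mono (\<lambda>U. rcomp m R (conv U))"
  by (auto intro!: monoI rcomp_mono)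

lemma WL21_Sup_closed: "\<forall>U\<in>\<U>. WL21 m I V W Z U \<Longrightarrow> WL21 m I V W Z (Sup \<U>)"
  unfolding WL21_def
  by (auto intro!: Sup_least le_Sup_closed[OF rcomp_conv_Sup_left mono_rcomp_conv_right])

lemma WL22_Sup_closed: "\<forall>U\<in>\<U>. WL22 m I V W Z U \<Longrightarrow> WL22 m I V W Z (Sup \<U>)"
  unfolding WL22_def
  by (auto intro!: Sup_least le_Sup_closed[OF rcomp_Sup_right mono_rcomp_left])

lemma WL23_Sup_closed: "\<forall>U\<in>\<U>. WL23 m I V W Z U \<Longrightarrow> WL23 m I V W Z (Sup \<U>)"
  unfolding WL23_def
  by (auto intro!: Sup_least le_Sup_closed[OF rcomp_conv_Sup_left mono_rcomp_conv_right]
      le_Sup_closed[OF rcomp_Sup_left mono_rcomp_right])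

lemma WL24_Sup_closed: "\<forall>U\<in>\<U>. WL24 m I V W Z U \<Longrightarrow> WL24 m I V W Z (Sup \<U>)"
  unfolding WL24_def
  by (auto intro!: Sup_least le_Sup_closed[OF rcomp_Sup_right mono_rcomp_left]
      le_Sup_closed[OF rcomp_conv_Sup_right mono_rcomp_conv_left])

lemma WL25_Sup_closed: "\<forall>U\<in>\<U>. WL25 m I V W Z U \<Longrightarrow> WL25 m I V W Z (Sup \<U>)"
  unfolding WL25_def
  by (auto intro!: Sup_least eq_Sup_closed[OF rcomp_Sup_right rcomp_Sup_left])

lemma WL26_Sup_closed: "\<forall>U\<in>\<U>. WL26 m I V W Z U \<Longrightarrow> WL26 m I V W Z (Sup \<U>)"
  unfolding WL26_def
  by (auto intro!: Sup_least eq_Sup_closed[OF rcomp_conv_Sup_left rcomp_conv_Sup_right])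

lemma partial_fuzzy_function_iff:
  "partial_fuzzy_function m r R \<longleftrightarrow> rcomp m (rcomp m R (conv R)) R \<le> R"
proof -
  have "partial_fuzzy_function m r R \<longleftrightarrow>
      (\<forall>a b1 b2 a'. m (m (R a b1) (R a b2)) (R a' b1) \<le> R a' b2 \<and>
                    m (m (R a b1) (R a b2)) (R a' b2) \<le> R a' b1)"
    by (simp add: partial_fuzzy_function_def cokernel_def biimp_def le_INF_iff residuation)
  also have "\<dots> \<longleftrightarrow> (\<forall>x y z t. m (m (R x z) (R y z)) (R y t) \<le> R x t)"
    by (metis mult_assoc mult_commute)
  also have "\<dots> \<longleftrightarrow> rcomp m (rcomp m R (conv R)) R \<le> R"
    by (simp add: le_fun_def rcomp_def conv_def mult_SUP_distrib_right SUP_le_iff) blast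
  finally show ?thesis .
qed

lemma rcomp_triple_le:
  assumes "U \<le> Z" and "partial_fuzzy_function m r Z"
  shows "rcomp m (rcomp m U (conv U)) U \<le> Z"
proof -
  have "rcomp m (rcomp m U (conv U)) U \<le> rcomp m (rcomp m Z (conv Z)) Z"
    using assms(1) by (intro rcomp_mono) auto
  also have "\<dots> \<le> Z"
    using assms(2) by (simp add: partial_fuzzy_function_iff)
  finally show ?thesis .
qed

lemma conv_rcomp_triple:
  "conv (rcomp m (rcomp m U (conv U)) U) = rcomp m (rcomp m (conv U) U) (conv U)"
  by (simp add: conv_rcomp rcomp_assoc)

lemma rcomp_le_rcomp_triple:
  assumes VU: "rcomp m V U \<le> rcomp m U W" and WU: "rcomp m W (conv U) \<le> rcomp m (conv U) V"
  shows "rcomp m V (rcomp m (rcomp m U (conv U)) U) \<le> rcomp m (rcomp m (rcomp m U (conv U)) U) W"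
proof -
  have "rcomp m V (rcomp m (rcomp m U (conv U)) U) = rcomp m (rcomp m V U) (rcomp m (conv U) U)"
    by (simp add: rcomp_assoc)
  also have "\<dots> \<le> rcomp m (rcomp m U W) (rcomp m (conv U) U)"
    using VU by (intro rcomp_mono) auto
  also have "\<dots> = rcomp m U (rcomp m (rcomp m W (conv U)) U)"
    by (simp add: rcomp_assoc)
  also have "\<dots> \<le> rcomp m U (rcomp m (rcomp m (conv U) V) U)"
    using WU by (intro rcomp_mono) auto
  also have "\<dots> = rcomp m (rcomp m U (conv U)) (rcomp m V U)"
    by (simp add: rcomp_assoc)
  also have "\<dots> \<le> rcomp m (rcomp m U (conv U)) (rcomp m U W)"
    using VU by (intro rcomp_mono) auto
  also have "\<dots> = rcomp m (rcomp m (rcomp m U (conv U)) U) W"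
    by (simp add: rcomp_assoc)
  finally show ?thesis .
qed

lemma WL24_rcomp_triple:
  assumes "WL24 m I V W Z U" and "partial_fuzzy_function m r Z"
  shows "WL24 m I V W Z (rcomp m (rcomp m U (conv U)) U)"
  unfolding WL24_def
proof (intro conjI ballI)
  fix i assume "i \<in> I"
  then have VU: "rcomp m (V i) U \<le> rcomp m U (W i)"
    and WU: "rcomp m (W i) (conv U) \<le> rcomp m (conv U) (V i)"
    using assms(1) by (auto simp: WL24_def)
  show "rcomp m (V i) (rcomp m (rcomp m U (conv U)) U) \<le> rcomp m (rcomp m (rcomp m U (conv U)) U) (W i)"
    using VU WU by (rule rcomp_le_rcomp_triple)
  show "rcomp m (W i) (conv (rcomp m (rcomp m U (conv U)) U))
      \<le> rcomp m (conv (rcomp m (rcomp m U (conv U)) U)) (V i)"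
    using rcomp_le_rcomp_triple[of "W i" "conv U" "V i"] VU WU by (simp add: conv_rcomp_triple)
next
  show "rcomp m (rcomp m U (conv U)) U \<le> Z"
    using assms by (intro rcomp_triple_le) (auto simp: WL24_def)
qed

lemma rcomp_le_rcomp_conv_iff:
  "rcomp m R S \<le> rcomp m R' S' \<longleftrightarrow> rcomp m (conv S) (conv R) \<le> rcomp m (conv S') (conv R')"
  by (simp flip: conv_rcomp)

lemma WL23_iff_WL24_conv:
  "WL23 m I V W Z U \<longleftrightarrow> WL24 m I (\<lambda>i. conv (V i)) (\<lambda>i. conv (W i)) Z U"
  unfolding WL23_def WL24_def
  by (simp add: rcomp_le_rcomp_conv_iff[of "conv _" U] rcomp_le_rcomp_conv_iff[of "conv _" "conv U"])

lemma WL23_rcomp_triple: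
  assumes "WL23 m I V W Z U" and "partial_fuzzy_function m r Z"
  shows "WL23 m I V W Z (rcomp m (rcomp m U (conv U)) U)"
  using assms by (simp add: WL23_iff_WL24_conv WL24_rcomp_triple)

lemma greatest_solution_partial_fuzzy_function:
  assumes "greatest_solution P U" and "P (rcomp m (rcomp m U (conv U)) U)"
  shows "partial_fuzzy_function m r U"
  using assms by (simp add: greatest_solution_def partial_fuzzy_function_iff)

end

theorem theorem4p4:
  fixes m r :: "'l::complete_lattice \<Rightarrow> 'l \<Rightarrow> 'l"
    and I :: "'i set"
    and V :: "'i \<Rightarrow> 'a \<Rightarrow> 'a \<Rightarrow> 'l"
    and W :: "'i \<Rightarrow> 'b \<Rightarrow> 'b \<Rightarrow> 'l"
    and Z :: "'a \<Rightarrow> 'b \<Rightarrow> 'l"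
  assumes "complete_residuated_lattice m r"
    and "I \<noteq> {}"
  shows "(\<exists>U. greatest_solution (WL21 m I V W Z) U)
       \<and> (\<exists>U. greatest_solution (WL22 m I V W Z) U)
       \<and> (\<exists>U. greatest_solution (WL23 m I V W Z) U)
       \<and> (\<exists>U. greatest_solution (WL24 m I V W Z) U)
       \<and> (\<exists>U. greatest_solution (WL25 m I V W Z) U)
       \<and> (\<exists>U. greatest_solution (WL26 m I V W Z) U)
       \<and> (partial_fuzzy_function m r Z \<longrightarrow>
            (\<forall>U. greatest_solution (WL23 m I V W Z) U \<longrightarrow> partial_fuzzy_function m r U)
          \<and> (\<forall>U. greatest_solution (WL24 m I V W Z) U \<longrightarrow> partial_fuzzy_function m r U))"
proof -
  interpret residuated m r using assms(1) by unfold_locales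
  show ?thesis
  proof (intro conjI impI allI)
    show "\<exists>U. greatest_solution (WL21 m I V W Z) U"
      by (rule exI, rule greatest_solution_Sup, rule WL21_Sup_closed)
    show "\<exists>U. greatest_solution (WL22 m I V W Z) U"
      by (rule exI, rule greatest_solution_Sup, rule WL22_Sup_closed)
    show "\<exists>U. greatest_solution (WL23 m I V W Z) U"
      by (rule exI, rule greatest_solution_Sup, rule WL23_Sup_closed)
    show "\<exists>U. greatest_solution (WL24 m I V W Z) U"
      by (rule exI, rule greatest_solution_Sup, rule WL24_Sup_closed)
    show "\<exists>U. greatest_solution (WL25 m I V W Z) U"
      by (rule exI, rule greatest_solution_Sup, rule WL25_Sup_closed)
    show "\<exists>U. greatest_solution (WL26 m I V W Z) U"
      by (rule exI, rule greatest_solution_Sup, rule WL26_Sup_closed)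
  next
    fix U assume "partial_fuzzy_function m r Z" and "greatest_solution (WL23 m I V W Z) U"
    then show "partial_fuzzy_function m r U"
      by (auto intro: greatest_solution_partial_fuzzy_function WL23_rcomp_triple
          simp: greatest_solution_def)
  next
    fix U assume "partial_fuzzy_function m r Z" and "greatest_solution (WL24 m I V W Z) U"
    then show "partial_fuzzy_function m r U"
      by (auto intro: greatest_solution_partial_fuzzy_function WL24_rcomp_triple
          simp: greatest_solution_def)
  qed
qed

end
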